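(* There is a constant $C<\infty$ such that for every $n\ge1$, every row of $M_n^{-1}$ has sum of absolute values of its entries at most $C$. Consequently, although the geodesics between $a_1$ and $a_{5n+3}$ in $F_n$ have unbounded length as $n\to\infty$, for every $n$ and every $f:F_n\to\mathbb C$ with $|f|\le1$, the unique solution of $f(w_1,w_2,w_3)=u_1(w_1)+u_2(w_2)+u_3(w_3)$ on $F_n$ with $u_1(x_1)=u_2(x_2)=u_3(x_3)=0$ satisfies $|u_i|\le C$ on $\Pi_iF_n$, $i=1,2,3$.
   Context: Let $X_1,X_2,X_3$ be pairwise disjoint nonempty sets and $\Omega=X_1\times X_2\times X_3$, with projections $\Pi_i:\Omega\to X_i$. Construction: fix pairwise distinct elements $x_1,y_1,\alpha_{5k-4},\alpha_{5k-1}$ ($k\ge1$) of $X_1$; pairwise distinct elements $x_2,y_2,\alpha_{5k-3},\alpha_{5k}$ ($k\ge1$) of $X_2$; pairwise distinct elements $x_3,z_3,\alpha_{5k-2}$ ($k\ge1$) of $X_3$. Set the convention $\alpha_{-3}:=y_2$, $\alpha_{-2}:=z_3$. Define $a_1=(x_1,x_2,x_3)$, $a_2=(y_1,y_2,x_3)$, $a_3=(y_1,x_2,z_3)$ and for $n\ge1$: $a_{5n-1}=(\alpha_{5n-4},\alpha_{5n-3},\alpha_{5n-2})$, $a_{5n}=(\alpha_{5n-1},\alpha_{5n},\alpha_{5n-2})$, $a_{5n+1}=(\alpha_{5n-4},\alpha_{5n},\alpha_{5n-7})$, $a_{5n+2}=(\alpha_{5n-1},\alpha_{5n-3},x_3)$,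 $a_{5n+3}=(x_1,\alpha_{5n-8},\alpha_{5n-2})$. Let $D_n=\{a_1,\dots,a_{5n+3}\}$, $b_n=(\alpha_{5n-1},y_2,z_3)$ and $F_n=D_n\cup\{b_n\}$. Let $M_n$ be the $0$–$1$ matrix whose rows are indexed by the points $a_2,a_3,\dots,a_{5n+3},b_n$ (in this order) and whose columns are indexed by $y_1,y_2,z_3,\alpha_1,\alpha_2,\dots,\alpha_{5n}$ (in this order), the entry being $1$ exactly when the column element is a coordinate of the row point. ($M_n$ is invertible.) *)

theory Defs
  imports Complex_Main "Jordan_Normal_Form.Matrix"
begin

definition alphaE :: "'a \<Rightarrow> 'a \<Rightarrow> (nat \<Rightarrow> 'a) \<Rightarrow> int \<Rightarrow> 'a" where
  "alphaE y2 z3 \<alpha> k = (if k = -3 then y2 else if k = -2 then z3 else \<alpha> (nat k))"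

definition apt :: "'a \<Rightarrow> 'a \<Rightarrow> 'a \<Rightarrow> 'a \<Rightarrow> 'a \<Rightarrow> 'a \<Rightarrow> (nat \<Rightarrow> 'a) \<Rightarrow> nat \<Rightarrow> 'a \<times> 'a \<times> 'a" where
  "apt x1 y1 x2 y2 x3 z3 \<alpha> i =
    (let A = alphaE y2 z3 \<alpha>; j = int i in
     if i = 1 then (x1, x2, x3)
     else if i = 2 then (y1, y2, x3)
     else if i = 3 then (y1, x2, z3)
     else if j mod 5 = 4 then (let n = (j + 1) div 5 in (A (5*n-4), A (5*n-3), A (5*n-2)))
     else if j mod 5 = 0 then (let n = j div 5 in (A (5*n-1), A (5*n), A (5*n-2)))
     else if j mod 5 = 1 then (let n = (j - 1) div 5 in (A (5*n-4), A (5*n), A (5*n-7)))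
     else if j mod 5 = 2 then (let n = (j - 2) div 5 in (A (5*n-1), A (5*n-3), x3))
     else (let n = (j - 3) div 5 in (x1, A (5*n-8), A (5*n-2))))"

definition bpt :: "'a \<Rightarrow> 'a \<Rightarrow> (nat \<Rightarrow> 'a) \<Rightarrow> nat \<Rightarrow> 'a \<times> 'a \<times> 'a" where
  "bpt y2 z3 \<alpha> n = (\<alpha> (5*n-1), y2, z3)"

definition Dset :: "'a \<Rightarrow> 'a \<Rightarrow> 'a \<Rightarrow> 'a \<Rightarrow> 'a \<Rightarrow> 'a \<Rightarrow> (nat \<Rightarrow> 'a) \<Rightarrow> nat \<Rightarrow> ('a \<times> 'a \<times> 'a) set" where
  "Dset x1 y1 x2 y2 x3 z3 \<alpha> n = apt x1 y1 x2 y2 x3 z3 \<alpha> ` {1..5*n+3}"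

definition Fset :: "'a \<Rightarrow> 'a \<Rightarrow> 'a \<Rightarrow> 'a \<Rightarrow> 'a \<Rightarrow> 'a \<Rightarrow> (nat \<Rightarrow> 'a) \<Rightarrow> nat \<Rightarrow> ('a \<times> 'a \<times> 'a) set" where
  "Fset x1 y1 x2 y2 x3 z3 \<alpha> n = insert (bpt y2 z3 \<alpha> n) (Dset x1 y1 x2 y2 x3 z3 \<alpha> n)"

definition construction :: "'a set \<Rightarrow> 'a set \<Rightarrow> 'a set \<Rightarrow> 'a \<Rightarrow> 'a \<Rightarrow> 'a \<Rightarrow> 'a \<Rightarrow> 'a \<Rightarrow> 'a \<Rightarrow> (nat \<Rightarrow> 'a) \<Rightarrow> bool" where
  "construction X1 X2 X3 x1 y1 x2 y2 x3 z3 \<alpha> \<longleftrightarrow>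
     X1 \<inter> X2 = {} \<and> X1 \<inter> X3 = {} \<and> X2 \<inter> X3 = {} \<and>
     (let S1 = {i. i \<ge> 1 \<and> (i mod 5 = 1 \<or> i mod 5 = 4)};
          S2 = {i. i \<ge> 1 \<and> (i mod 5 = 2 \<or> i mod 5 = 0)};
          S3 = {i. i \<ge> 1 \<and> i mod 5 = 3} in
      x1 \<in> X1 \<and> y1 \<in> X1 \<and> \<alpha> ` S1 \<subseteq> X1 \<and> x1 \<noteq> y1 \<and> x1 \<notin> \<alpha> ` S1 \<and> y1 \<notin> \<alpha> ` S1 \<and> inj_on \<alpha> S1 \<and>
      x2 \<in> X2 \<and> y2 \<in> X2 \<and> \<alpha> ` S2 \<subseteq> X2 \<and> x2 \<noteq> y2 \<and> x2 \<notin> \<alpha> ` S2 \<and> y2 \<notin> \<alpha> ` S2 \<and> inj_on \<alpha> S2 \<and>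
      x3 \<in> X3 \<and> z3 \<in> X3 \<and> \<alpha> ` S3 \<subseteq> X3 \<and> x3 \<noteq> z3 \<and> x3 \<notin> \<alpha> ` S3 \<and> z3 \<notin> \<alpha> ` S3 \<and> inj_on \<alpha> S3)"

definition coords :: "'a \<times> 'a \<times> 'a \<Rightarrow> 'a set" where
  "coords p = {fst p, fst (snd p), snd (snd p)}"

text \<open>Matrix M_n (0-indexed): row r < 5n+2 is the point a_(r+2), row 5n+2 is b_n;
  column 0,1,2 are y1, y2, z3 and column c >= 3 is alpha_(c-2).\<close>
definition Mmat :: "'a \<Rightarrow> 'a \<Rightarrow> 'a \<Rightarrow> 'a \<Rightarrow> 'a \<Rightarrow> 'a \<Rightarrow> (nat \<Rightarrow> 'a) \<Rightarrow> nat \<Rightarrow> real mat" where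
  "Mmat x1 y1 x2 y2 x3 z3 \<alpha> n =
     mat (5*n+3) (5*n+3) (\<lambda>(r, c).
       let p = (if r < 5*n+2 then apt x1 y1 x2 y2 x3 z3 \<alpha> (r+2) else bpt y2 z3 \<alpha> n);
           e = (if c = 0 then y1 else if c = 1 then y2 else if c = 2 then z3 else \<alpha> (c-2))
       in if e \<in> coords p then 1 else 0)"

end

theory Submission
  imports Defs "Jordan_Normal_Form.Determinant"
begin

text \<open>Let W be the function on X1 \<union> X2 \<union> X3 that agrees with u_i on X_i, or, for the matrix,
  the function taking the value u_c at the label of column c. Both parts of the theorem reduce to
  one estimate: if W vanishes at x1, x2, x3 and |W w1 + W w2 + W w3| \<le> 1 at every point w \<noteq> a_1
  of F_n, then |W| \<le> 20 at every coordinate of F_n. Eliminating inside the k-th block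
  a_(5k-1), ..., a_(5k+3) gives |2 W(\<alpha>_(5k-2)) - W(\<alpha>_(5k-7))| \<le> 4, and with the next block the
  contraction |W(\<alpha>_(5k+2))| \<le> (7 + |W(\<alpha>_(5k-3))|) / 2; so these values stay below the fixed
  point 7, uniformly in n, and all others follow by the triangle inequality, b_n closing the
  chain at its far end. For the matrix, |M_n u| \<le> 1 entrywise forces |u| \<le> 20: this excludes a
  kernel, and for B = M_n^(-1) the choice u = B (sgn B_ij)_j bounds the i-th absolute row sum.\<close>

lemma norm_diff_mono: "norm a \<le> r \<Longrightarrow> norm b \<le> s \<Longrightarrow> norm (a - b) \<le> r + s"
  for a b :: "'a::real_normed_vector"
  using norm_triangle_ineq4[of a b] by simp

text \<open>The rows a_(5k-1), ..., a_(5k+3) for k = 1..n, a_2, a_3 and b_n, written with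
  P k, ..., T k for W at \<alpha>_(5k-4), ..., \<alpha>_(5k), Q 0 = W y2, R 0 = W z3 and Y = W y1.\<close>
lemma chain_system_bounded:
  fixes P Q R S T :: "nat \<Rightarrow> 'a::real_normed_field" and Y :: 'a
  assumes "n \<ge> 1"
    and E1: "\<And>k. k < n \<Longrightarrow> norm (P (k+1) + Q (k+1) + R (k+1)) \<le> 1"
    and E2: "\<And>k. k < n \<Longrightarrow> norm (S (k+1) + T (k+1) + R (k+1)) \<le> 1"
    and E3: "\<And>k. k < n \<Longrightarrow> norm (P (k+1) + T (k+1) + R k) \<le> 1"
    and E4: "\<And>k. k < n \<Longrightarrow> norm (S (k+1) + Q (k+1)) \<le> 1"
    and E5: "\<And>k. k < n \<Longrightarrow> norm (Q k + R (k+1)) \<le> 1"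
    and YQ: "norm (Y + Q 0) \<le> 1" and YR: "norm (Y + R 0) \<le> 1"
    and SQR: "norm (S n + Q 0 + R 0) \<le> 1"
  shows "norm Y \<le> 20"
    and "\<And>k. k \<le> n \<Longrightarrow> norm (Q k) \<le> 20 \<and> norm (R k) \<le> 20"
    and "\<And>k. k < n \<Longrightarrow> norm (P (k+1)) \<le> 20 \<and> norm (S (k+1)) \<le> 20 \<and> norm (T (k+1)) \<le> 20"
proof -
  have R_step: "norm (2 * R (k+1) - R k) \<le> 4" if "k < n" for k
  proof -
    have "norm (2 * R (k+1) - R k) = norm ((P (k+1) + Q (k+1) + R (k+1))
        + (S (k+1) + T (k+1) + R (k+1)) - (S (k+1) + Q (k+1)) - (P (k+1) + T (k+1) + R k))"
      by (rule arg_cong[of _ _ norm]) (simp add: algebra_simps)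
    also have "\<dots> \<le> 1 + 1 + 1 + 1"
      by (intro norm_diff_mono norm_triangle_mono E1 E2 E3 E4 that)
    finally show ?thesis by simp
  qed
  have YQR: "norm (R 0 - Q 0) \<le> 2"
    using norm_diff_mono[OF YR YQ] by simp
  have Q0: "norm (Q 0) \<le> 8/3"
  proof -
    have "norm (3 * Q 0) = norm ((Q 0 + R 1) + (Q 0 + R 1) - (2 * R 1 - R 0) - (R 0 - Q 0))"
      by (rule arg_cong[of _ _ norm]) (simp add: algebra_simps)
    also have "\<dots> \<le> 1 + 1 + 4 + 2"
      using E5[of 0] R_step[of 0] \<open>n \<ge> 1\<close>
      by (intro norm_diff_mono norm_triangle_mono YQR) auto
    finally show ?thesis by (simp add: norm_mult)
  qed
  have Q_step: "norm (Q (k+1)) \<le> (7 + norm (Q k)) / 2" if "k + 1 < n" for k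
  proof -
    have "norm (2 * Q (k+1)) = norm ((Q (k+1) + R (k+2)) + (Q (k+1) + R (k+2))
        - (Q k + R (k+1)) - (2 * R (k+2) - R (k+1)) + Q k)"
      by (rule arg_cong[of _ _ norm]) (simp add: algebra_simps)
    also have "\<dots> \<le> 1 + 1 + 1 + 4 + norm (Q k)"
      using E5[of "k+1"] E5[of k] R_step[of "k+1"] that
      by (intro norm_triangle_mono norm_diff_mono order_refl) auto
    finally show ?thesis by (simp add: norm_mult)
  qed
  have Q_lt: "norm (Q k) \<le> 7" if "k < n" for k
    using that
  proof (induction k)
    case 0
    then show ?case using Q0 by simp
  next
    case (Suc k)
    then show ?case using Q_step[of k] by simp
  qed
  have R0: "norm (R 0) \<le> 5"
    using norm_triangle_mono[OF YQR Q0] by simp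
  have Sn: "norm (S n) \<le> 9"
    using norm_diff_mono[OF norm_diff_mono[OF SQR Q0] R0] by simp
  have Qn: "norm (Q n) \<le> 10"
  proof -
    obtain m where "n = m + 1" using \<open>n \<ge> 1\<close> by (metis le_add_diff_inverse2)
    then show ?thesis using norm_diff_mono[OF E4[of m] Sn] by simp
  qed
  have Q: "norm (Q k) \<le> 10" if "k \<le> n" for k
    using Q_lt[of k] Qn that by (cases "k = n") auto
  have R: "norm (R k) \<le> 8" if "k \<le> n" for k
  proof (cases k)
    case 0
    then show ?thesis using R0 by simp
  next
    case (Suc m)
    then show ?thesis using norm_diff_mono[OF E5[of m] Q_lt[of m]] that by simp
  qed
  have S: "norm (S (k+1)) \<le> 11" if "k < n" for k
    using norm_diff_mono[OF E4[OF that] Q[of "k+1"]] that by simp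
  show "norm Y \<le> 20"
    using norm_diff_mono[OF YQ Q0] by simp
  show "norm (Q k) \<le> 20 \<and> norm (R k) \<le> 20" if "k \<le> n" for k
    using Q[OF that] R[OF that] by simp
  show "norm (P (k+1)) \<le> 20 \<and> norm (S (k+1)) \<le> 20 \<and> norm (T (k+1)) \<le> 20" if "k < n" for k
    using norm_diff_mono[OF norm_diff_mono[OF E1[OF that] Q[of "k+1"]] R[of "k+1"]]
      norm_diff_mono[OF norm_diff_mono[OF E2[OF that] S[OF that]] R[of "k+1"]] S[OF that] that
    by simp
qed

definition vec_on_labels :: "(nat \<Rightarrow> 'a) \<Rightarrow> 'b::zero vec \<Rightarrow> 'a \<Rightarrow> 'b" where
  "vec_on_labels L u t =
    (if t \<in> L ` {..<dim_vec u} then u $ inv_into {..<dim_vec u} L t else 0)"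

lemma vec_on_labels_label:
  "inj_on L {..<dim_vec u} \<Longrightarrow> c < dim_vec u \<Longrightarrow> vec_on_labels L u (L c) = u $ c"
  by (simp add: vec_on_labels_def)

lemma vec_on_labels_unlabelled: "t \<notin> range L \<Longrightarrow> vec_on_labels L u t = 0"
  by (auto simp: vec_on_labels_def)

lemma sum_if_label_in:
  fixes g :: "nat \<Rightarrow> 'b::comm_monoid_add"
  assumes "inj_on L I" "finite I" "finite T"
  shows "(\<Sum>c\<in>I. if L c \<in> T then g c else 0)
    = (\<Sum>t\<in>T. if t \<in> L ` I then g (inv_into I L t) else 0)"
proof -
  have inj: "inj_on L {c \<in> I. L c \<in> T}"
    using assms(1) by (rule inj_on_subset) auto
  have "(\<Sum>c\<in>I. if L c \<in> T then g c else 0) = (\<Sum>c\<in>{c \<in> I. L c \<in> T}. g c)"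
    using assms(2) by (simp add: sum.inter_filter)
  also have "\<dots> = (\<Sum>t\<in>L ` {c \<in> I. L c \<in> T}. g (inv_into I L t))"
    using inj assms(1) by (simp add: sum.reindex)
  also have "L ` {c \<in> I. L c \<in> T} = {t \<in> T. t \<in> L ` I}"
    by auto
  also have "(\<Sum>t\<in>{t \<in> T. t \<in> L ` I}. g (inv_into I L t))
      = (\<Sum>t\<in>T. if t \<in> L ` I then g (inv_into I L t) else 0)"
    using assms(3) by (simp add: sum.inter_filter)
  finally show ?thesis .
qed

lemma invertible_mat_if_preimage_bounded:
  fixes M :: "real mat"
  assumes M: "M \<in> carrier_mat N N"
    and bounded: "\<And>u j. u \<in> carrier_vec N \<Longrightarrow> (\<And>r. r < N \<Longrightarrow> \<bar>(M *\<^sub>v u) $ r\<bar> \<le> 1) \<Longrightarrow> j < N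
      \<Longrightarrow> \<bar>u $ j\<bar> \<le> C"
  shows "invertible_mat M"
proof -
  have "det M \<noteq> 0"
  proof
    assume "det M = 0"
    then obtain v where v: "v \<in> carrier_vec N" "v \<noteq> 0\<^sub>v N" "M *\<^sub>v v = 0\<^sub>v N"
      using det_0_iff_vec_prod_zero_field[OF M] by auto
    then obtain j where j: "j < N" "v $ j \<noteq> 0"
      by (metis carrier_vecD eq_vecI index_zero_vec)
    define s where "s = (\<bar>C\<bar> + 1) / \<bar>v $ j\<bar>"
    have "M *\<^sub>v (s \<cdot>\<^sub>v v) = s \<cdot>\<^sub>v (M *\<^sub>v v)"
      using mult_mat_vec[OF M v(1)] .
    also have "\<dots> = 0\<^sub>v N"
      unfolding v(3) by (intro eq_vecI) auto
    finally have "\<bar>(s \<cdot>\<^sub>v v) $ j\<bar> \<le> C"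
      using bounded[of "s \<cdot>\<^sub>v v" j] v(1) j(1) by simp
    moreover have "\<bar>(s \<cdot>\<^sub>v v) $ j\<bar> = \<bar>C\<bar> + 1"
      using v(1) j unfolding s_def by (simp add: abs_mult)
    ultimately show False by simp
  qed
  then obtain B where "B \<in> carrier_mat N N" "B * M = 1\<^sub>m N" "M * B = 1\<^sub>m N"
    using det_non_zero_imp_unit[OF M, of "()"] unfolding Units_def ring_mat_def by auto
  then show ?thesis
    using M unfolding invertible_mat_def inverts_mat_def by auto
qed

lemma inverse_row_abs_sum_le:
  fixes M B :: "real mat"
  assumes M: "M \<in> carrier_mat N N"
    and bounded: "\<And>u j. u \<in> carrier_vec N \<Longrightarrow> (\<And>r. r < N \<Longrightarrow> \<bar>(M *\<^sub>v u) $ r\<bar> \<le> 1) \<Longrightarrow> j < N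
      \<Longrightarrow> \<bar>u $ j\<bar> \<le> C"
    and "inverts_mat M B" "inverts_mat B M" and i: "i < dim_row B"
  shows "(\<Sum>j<dim_col B. \<bar>B $$ (i, j)\<bar>) \<le> C"
proof -
  have MB: "M * B = 1\<^sub>m N" and BM: "B * M = 1\<^sub>m (dim_row B)"
    using assms(3,4) M unfolding inverts_mat_def by auto
  have "dim_col B = N"
    using arg_cong[OF MB, of dim_col] by simp
  moreover have "dim_row B = N"
    using arg_cong[OF BM, of dim_col] M by simp
  ultimately have B: "B \<in> carrier_mat N N"
    by auto
  define f where "f = vec N (\<lambda>j. sgn (B $$ (i, j)))"
  have f: "f \<in> carrier_vec N"
    unfolding f_def by simp
  have "M *\<^sub>v (B *\<^sub>v f) = f"
    using M B f by (simp add: assoc_mult_mat_vec[symmetric] MB)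
  then have "\<bar>(B *\<^sub>v f) $ i\<bar> \<le> C"
    using bounded[of "B *\<^sub>v f" i] B f i by (simp add: f_def abs_sgn_eq)
  moreover have "(B *\<^sub>v f) $ i = (\<Sum>j<dim_col B. \<bar>B $$ (i, j)\<bar>)"
    using B i by (simp add: f_def scalar_prod_def atLeast0LessThan abs_sgn[symmetric] mult.commute)
  ultimately show ?thesis by simp
qed

definition coord_sum :: "('a \<Rightarrow> 'b::plus) \<Rightarrow> 'a \<times> 'a \<times> 'a \<Rightarrow> 'b" where
  "coord_sum W p = W (fst p) + W (fst (snd p)) + W (snd (snd p))"

definition row_point :: "'a \<Rightarrow> 'a \<Rightarrow> 'a \<Rightarrow> 'a \<Rightarrow> 'a \<Rightarrow> 'a \<Rightarrow> (nat \<Rightarrow> 'a) \<Rightarrow> nat \<Rightarrow> nat \<Rightarrow> 'a \<times> 'a \<times> 'a"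
  where "row_point x1 y1 x2 y2 x3 z3 \<alpha> n r =
    (if r < 5*n+2 then apt x1 y1 x2 y2 x3 z3 \<alpha> (r+2) else bpt y2 z3 \<alpha> n)"

definition col_label :: "'a \<Rightarrow> 'a \<Rightarrow> 'a \<Rightarrow> (nat \<Rightarrow> 'a) \<Rightarrow> nat \<Rightarrow> 'a" where
  "col_label y1 y2 z3 \<alpha> c =
    (if c = 0 then y1 else if c = 1 then y2 else if c = 2 then z3 else \<alpha> (c-2))"

lemma alphaE_nonneg: "0 \<le> i \<Longrightarrow> alphaE y2 z3 \<alpha> i = \<alpha> (nat i)"
  by (simp add: alphaE_def)

lemma alphaE_previous_block:
  "alphaE y2 z3 \<alpha> (5 * int k - 3) = (if k = 0 then y2 else \<alpha> (5*(k-1)+2))"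
  "alphaE y2 z3 \<alpha> (5 * int k - 2) = (if k = 0 then z3 else \<alpha> (5*(k-1)+3))"
  by (cases k; simp add: alphaE_def nat_add_distrib nat_mult_distrib add.commute)
    (cases k; simp add: alphaE_def nat_add_distrib nat_mult_distrib add.commute)

lemma apt_simps:
  "apt x1 y1 x2 y2 x3 z3 \<alpha> 1 = (x1, x2, x3)"
  "apt x1 y1 x2 y2 x3 z3 \<alpha> 2 = (y1, y2, x3)"
  "apt x1 y1 x2 y2 x3 z3 \<alpha> 3 = (y1, x2, z3)"
  "apt x1 y1 x2 y2 x3 z3 \<alpha> (5*k+4) = (\<alpha> (5*k+1), \<alpha> (5*k+2), \<alpha> (5*k+3))"
  "apt x1 y1 x2 y2 x3 z3 \<alpha> (5*k+5) = (\<alpha> (5*k+4), \<alpha> (5*k+5), \<alpha> (5*k+3))"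
  "apt x1 y1 x2 y2 x3 z3 \<alpha> (5*k+6)
    = (\<alpha> (5*k+1), \<alpha> (5*k+5), if k = 0 then z3 else \<alpha> (5*(k-1)+3))"
  "apt x1 y1 x2 y2 x3 z3 \<alpha> (5*k+7) = (\<alpha> (5*k+4), \<alpha> (5*k+2), x3)"
  "apt x1 y1 x2 y2 x3 z3 \<alpha> (5*k+8)
    = (x1, if k = 0 then y2 else \<alpha> (5*(k-1)+2), \<alpha> (5*k+3))"
  unfolding apt_def Let_def
  by (simp_all add: alphaE_nonneg alphaE_previous_block nat_add_distrib nat_mult_distrib
      add.commute)

lemma row_point_cases:
  assumes "r < 5*n+3"
  obtains "row_point x1 y1 x2 y2 x3 z3 \<alpha> n r = (y1, y2, x3)"
  | "row_point x1 y1 x2 y2 x3 z3 \<alpha> n r = (y1, x2, z3)"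
  | "row_point x1 y1 x2 y2 x3 z3 \<alpha> n r = (\<alpha> (5*n-1), y2, z3)"
  | k where "k < n" "row_point x1 y1 x2 y2 x3 z3 \<alpha> n r = (\<alpha> (5*k+1), \<alpha> (5*k+2), \<alpha> (5*k+3))"
  | k where "k < n" "row_point x1 y1 x2 y2 x3 z3 \<alpha> n r = (\<alpha> (5*k+4), \<alpha> (5*k+5), \<alpha> (5*k+3))"
  | k where "k < n"
      "row_point x1 y1 x2 y2 x3 z3 \<alpha> n r
        = (\<alpha> (5*k+1), \<alpha> (5*k+5), if k = 0 then z3 else \<alpha> (5*(k-1)+3))"
  | k where "k < n" "row_point x1 y1 x2 y2 x3 z3 \<alpha> n r = (\<alpha> (5*k+4), \<alpha> (5*k+2), x3)"
  | k where "k < n"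
      "row_point x1 y1 x2 y2 x3 z3 \<alpha> n r
        = (x1, if k = 0 then y2 else \<alpha> (5*(k-1)+2), \<alpha> (5*k+3))"
proof -
  consider "r = 0" | "r = 1" | "r = 5*n+2" | "2 \<le> r" "r < 5*n+2"
    using assms by linarith
  then show ?thesis
  proof cases
    case 1
    then show ?thesis
      using that(1) unfolding row_point_def apt_def by simp
  next
    case 2
    then show ?thesis
      using that(2) unfolding row_point_def apt_def by simp
  next
    case 3
    then show ?thesis
      using that(3) unfolding row_point_def bpt_def by simp
  next
    case 4
    define k where "k = (r - 2) div 5"
    have "k < n" using 4 unfolding k_def by linarith
    moreover have "r + 2 \<in> {5*k+4, 5*k+5, 5*k+6, 5*k+7, 5*k+8}"
      using 4 unfolding k_def insert_iff by linarith
    ultimately show ?thesis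
      using that(4-8) 4 unfolding row_point_def by (auto simp only: apt_simps if_True)
  qed
qed

lemma apt_eq_row_point:
  assumes "2 \<le> i" "i \<le> 5*n+3"
  shows "apt x1 y1 x2 y2 x3 z3 \<alpha> i = row_point x1 y1 x2 y2 x3 z3 \<alpha> n (i - 2)"
proof -
  from assms have "i - 2 < 5*n+2" "i - 2 + 2 = i" by auto
  then show ?thesis
    unfolding row_point_def by presburger
qed

lemma row_point_in_Fset:
  "r < 5*n+3 \<Longrightarrow> row_point x1 y1 x2 y2 x3 z3 \<alpha> n r \<in> Fset x1 y1 x2 y2 x3 z3 \<alpha> n"
  by (auto simp: row_point_def Fset_def Dset_def)

lemma Fset_eq_row_points:
  "Fset x1 y1 x2 y2 x3 z3 \<alpha> n
    = insert (x1, x2, x3) (row_point x1 y1 x2 y2 x3 z3 \<alpha> n ` {..<5*n+3})"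
    (is "?F = insert ?a1 ?rows")
proof
  have "apt x1 y1 x2 y2 x3 z3 \<alpha> i \<in> insert ?a1 ?rows" if "i \<in> {1..5*n+3}" for i
  proof (cases "i = 1")
    case False
    with that have "2 \<le> i" "i \<le> 5*n+3" by auto
    then show ?thesis
      unfolding apt_eq_row_point[OF \<open>2 \<le> i\<close> \<open>i \<le> 5*n+3\<close>] by simp
  qed (simp only: apt_simps insert_iff simp_thms)
  moreover have "bpt y2 z3 \<alpha> n \<in> ?rows"
    by (rule image_eqI[of _ _ "5*n+2"]) (simp_all add: row_point_def)
  ultimately show "?F \<subseteq> insert ?a1 ?rows"
    unfolding Fset_def Dset_def by blast
next
  have "?a1 \<in> ?F"
    unfolding Fset_def Dset_def by (rule insertI2, rule image_eqI[of _ _ 1]) (simp_all add: apt_def)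
  then show "insert ?a1 ?rows \<subseteq> ?F"
    using row_point_in_Fset by auto
qed

lemma coord_sum_small_imp_bounded:
  fixes W :: "'a \<Rightarrow> 'b::real_normed_field"
  assumes "n \<ge> 1" and W_x: "W x1 = 0" "W x2 = 0" "W x3 = 0"
    and rows: "\<And>r. r < 5*n+3 \<Longrightarrow> norm (coord_sum W (row_point x1 y1 x2 y2 x3 z3 \<alpha> n r)) \<le> 1"
  shows "norm (W y1) \<le> 20" "norm (W y2) \<le> 20" "norm (W z3) \<le> 20"
    and "k < n \<Longrightarrow> j \<in> {1..5} \<Longrightarrow> norm (W (\<alpha> (5*k+j))) \<le> 20"
proof -
  have apt_small: "norm (coord_sum W (apt x1 y1 x2 y2 x3 z3 \<alpha> i)) \<le> 1"
    if "2 \<le> i" "i \<le> 5*n+3" for i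
    using rows[of "i - 2"] that unfolding apt_eq_row_point[OF that] by simp
  define P where "P k = W (\<alpha> (5*(k-1)+1))" for k
  define Q where "Q k = W (if k = 0 then y2 else \<alpha> (5*(k-1)+2))" for k
  define R where "R k = W (if k = 0 then z3 else \<alpha> (5*(k-1)+3))" for k
  define S where "S k = W (\<alpha> (5*(k-1)+4))" for k
  define T where "T k = W (\<alpha> (5*(k-1)+5))" for k
  have block: "P (k+1) = W (\<alpha> (5*k+1))" "Q (k+1) = W (\<alpha> (5*k+2))" "R (k+1) = W (\<alpha> (5*k+3))"
    "S (k+1) = W (\<alpha> (5*k+4))" "T (k+1) = W (\<alpha> (5*k+5))" for k
    unfolding P_def Q_def R_def S_def T_def by simp_all
  have E1: "norm (P (k+1) + Q (k+1) + R (k+1)) \<le> 1" if "k < n" for k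
    using apt_small[of "5*k+4"] that unfolding block apt_simps coord_sum_def by simp
  have E2: "norm (S (k+1) + T (k+1) + R (k+1)) \<le> 1" if "k < n" for k
    using apt_small[of "5*k+5"] that unfolding block apt_simps coord_sum_def by simp
  have E3: "norm (P (k+1) + T (k+1) + R k) \<le> 1" if "k < n" for k
    using apt_small[of "5*k+6"] that unfolding block apt_simps coord_sum_def R_def by simp
  have E4: "norm (S (k+1) + Q (k+1)) \<le> 1" if "k < n" for k
    using apt_small[of "5*k+7"] that W_x unfolding block apt_simps coord_sum_def by simp
  have E5: "norm (Q k + R (k+1)) \<le> 1" if "k < n" for k
    using apt_small[of "5*k+8"] that W_x unfolding block apt_simps coord_sum_def Q_def by simp
  have YQ: "norm (W y1 + Q 0) \<le> 1" and YR: "norm (W y1 + R 0) \<le> 1"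
    using apt_small[of 2] apt_small[of 3] \<open>n \<ge> 1\<close> W_x
    by (simp_all add: apt_def coord_sum_def Q_def R_def)
  have "5*n-1 = 5*(n-1)+4"
    using \<open>n \<ge> 1\<close> by linarith
  then have SQR: "norm (S n + Q 0 + R 0) \<le> 1"
    using rows[of "5*n+2"] by (simp add: row_point_def bpt_def coord_sum_def S_def Q_def R_def)
  note bounds = chain_system_bounded[OF \<open>n \<ge> 1\<close> E1 E2 E3 E4 E5 YQ YR SQR]
  show "norm (W y1) \<le> 20"
    by (rule bounds(1))
  show "norm (W y2) \<le> 20" "norm (W z3) \<le> 20"
    using bounds(2)[of 0] by (simp_all add: Q_def R_def)
  show "norm (W (\<alpha> (5*k+j))) \<le> 20" if "k < n" "j \<in> {1..5}"
  proof -
    from that(2) have "j = 1 \<or> j = 2 \<or> j = 3 \<or> j = 4 \<or> j = 5" by auto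
    then show ?thesis
      using bounds(2)[of "k+1"] bounds(3)[of k] \<open>k < n\<close> unfolding block by auto
  qed
qed

lemma coord_sum_small_imp_labels_bounded:
  fixes W :: "'a \<Rightarrow> 'b::real_normed_field"
  assumes "n \<ge> 1" and "W x1 = 0" "W x2 = 0" "W x3 = 0"
    and "\<And>r. r < 5*n+3 \<Longrightarrow> norm (coord_sum W (row_point x1 y1 x2 y2 x3 z3 \<alpha> n r)) \<le> 1"
    and "c < 5*n+3"
  shows "norm (W (col_label y1 y2 z3 \<alpha> c)) \<le> 20"
proof (cases "c \<le> 2")
  case True
  then show ?thesis
    using coord_sum_small_imp_bounded(1-3)[OF assms(1-5)]
    by (auto simp: col_label_def le_Suc_eq numeral_eq_Suc)
next
  case False
  define k j where "k = (c - 3) div 5" and "j = (c - 3) mod 5 + 1"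
  have "c - 2 = 5*k + j"
    using div_mult_mod_eq[of "c - 3" 5] False unfolding k_def j_def by linarith
  moreover have "j \<in> {1..5}"
    unfolding j_def by simp
  moreover from \<open>c - 2 = 5*k + j\<close> \<open>c < 5*n+3\<close> have "k < n"
    unfolding j_def by linarith
  ultimately show ?thesis
    using False coord_sum_small_imp_bounded(4)[OF assms(1-5)] by (simp add: col_label_def)
qed

lemma construction_parts:
  assumes "construction X1 X2 X3 x1 y1 x2 y2 x3 z3 \<alpha>"
  shows "X1 \<inter> X2 = {}" "X1 \<inter> X3 = {}" "X2 \<inter> X3 = {}"
    and "x1 \<in> X1" "y1 \<in> X1" "x2 \<in> X2" "y2 \<in> X2" "x3 \<in> X3" "z3 \<in> X3"
    and "x1 \<noteq> y1" "x2 \<noteq> y2" "x3 \<noteq> z3"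
  using assms unfolding construction_def Let_def by simp_all

lemma construction_alpha:
  assumes "construction X1 X2 X3 x1 y1 x2 y2 x3 z3 \<alpha>" and "1 \<le> i"
  shows "i mod 5 \<in> {1, 4} \<Longrightarrow> \<alpha> i \<in> X1 - {x1, y1}"
    and "i mod 5 \<in> {0, 2} \<Longrightarrow> \<alpha> i \<in> X2 - {x2, y2}"
    and "i mod 5 = 3 \<Longrightarrow> \<alpha> i \<in> X3 - {x3, z3}"
    and "1 \<le> j \<Longrightarrow> \<alpha> i = \<alpha> j \<Longrightarrow> i = j"
proof -
  define S1 where "S1 = {i::nat. i \<ge> 1 \<and> (i mod 5 = 1 \<or> i mod 5 = 4)}"
  define S2 where "S2 = {i::nat. i \<ge> 1 \<and> (i mod 5 = 2 \<or> i mod 5 = 0)}"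
  define S3 where "S3 = {i::nat. i \<ge> 1 \<and> i mod 5 = 3}"
  note c = assms(1)[unfolded construction_def Let_def, folded S1_def S2_def S3_def]
  have part1: "\<alpha> k \<in> X1 - {x1, y1}" if "k \<in> S1" for k
    using that c by (metis DiffI empty_iff image_eqI image_subset_iff insertE)
  have part2: "\<alpha> k \<in> X2 - {x2, y2}" if "k \<in> S2" for k
    using that c by (metis DiffI empty_iff image_eqI image_subset_iff insertE)
  have part3: "\<alpha> k \<in> X3 - {x3, z3}" if "k \<in> S3" for k
    using that c by (metis DiffI empty_iff image_eqI image_subset_iff insertE)
  show "i mod 5 \<in> {1, 4} \<Longrightarrow> \<alpha> i \<in> X1 - {x1, y1}"
    using part1[of i] \<open>1 \<le> i\<close> unfolding S1_def by auto
  show "i mod 5 \<in> {0, 2} \<Longrightarrow> \<alpha> i \<in> X2 - {x2, y2}"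
    using part2[of i] \<open>1 \<le> i\<close> unfolding S2_def by auto
  show "i mod 5 = 3 \<Longrightarrow> \<alpha> i \<in> X3 - {x3, z3}"
    using part3[of i] \<open>1 \<le> i\<close> unfolding S3_def by auto
  have classes: "k \<in> S1 \<or> k \<in> S2 \<or> k \<in> S3" if "1 \<le> k" for k
    unfolding S1_def S2_def S3_def mem_Collect_eq using that by presburger
  have inj: "inj_on \<alpha> S1" "inj_on \<alpha> S2" "inj_on \<alpha> S3"
    and disj: "X1 \<inter> X2 = {}" "X1 \<inter> X3 = {}" "X2 \<inter> X3 = {}"
    using c by simp_all
  show "i = j" if "1 \<le> j" and eq: "\<alpha> i = \<alpha> j"
    using classes[OF \<open>1 \<le> i\<close>] classes[OF \<open>1 \<le> j\<close>]
  proof (elim disjE)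
    assume "i \<in> S1" "j \<in> S1" then show ?thesis using inj_onD[OF inj(1) eq] by blast
  next
    assume "i \<in> S2" "j \<in> S2" then show ?thesis using inj_onD[OF inj(2) eq] by blast
  next
    assume "i \<in> S3" "j \<in> S3" then show ?thesis using inj_onD[OF inj(3) eq] by blast
  qed (use part1 part2 part3 disj eq in \<open>metis DiffD1 disjoint_iff\<close>)+
qed

lemma construction_alpha_blocks:
  assumes c: "construction X1 X2 X3 x1 y1 x2 y2 x3 z3 \<alpha>"
  shows "\<alpha> (5*k+1) \<in> X1" "\<alpha> (5*k+4) \<in> X1" "\<alpha> (5*k+2) \<in> X2" "\<alpha> (5*k+5) \<in> X2"
    "\<alpha> (5*k+3) \<in> X3"
proof -
  have A1: "\<alpha> m \<in> X1" if "1 \<le> m" "m mod 5 = 1 \<or> m mod 5 = 4" for m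
    using construction_alpha(1)[OF c that(1)] that(2) by auto
  have A2: "\<alpha> m \<in> X2" if "1 \<le> m" "m mod 5 = 0 \<or> m mod 5 = 2" for m
    using construction_alpha(2)[OF c that(1)] that(2) by auto
  have A3: "\<alpha> m \<in> X3" if "1 \<le> m" "m mod 5 = 3" for m
    using construction_alpha(3)[OF c that(1)] that(2) by auto
  show "\<alpha> (5*k+1) \<in> X1" "\<alpha> (5*k+4) \<in> X1"
    by (rule A1; presburger)+
  show "\<alpha> (5*k+2) \<in> X2" "\<alpha> (5*k+5) \<in> X2"
    by (rule A2; presburger)+
  show "\<alpha> (5*k+3) \<in> X3"
    by (rule A3; presburger)
qed

lemma row_point_coords_in_parts:
  assumes c: "construction X1 X2 X3 x1 y1 x2 y2 x3 z3 \<alpha>" and "n \<ge> 1" "r < 5*n+3"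
  defines "p \<equiv> row_point x1 y1 x2 y2 x3 z3 \<alpha> n r"
  shows "fst p \<in> X1 \<and> fst (snd p) \<in> X2 \<and> snd (snd p) \<in> X3"
proof -
  have "5*n-1 = 5*(n-1)+4"
    using \<open>n \<ge> 1\<close> by linarith
  then have "\<alpha> (5*n-1) \<in> X1"
    using construction_alpha_blocks(2)[OF c, of "n-1"] by simp
  with \<open>r < 5*n+3\<close> show ?thesis
    unfolding p_def
    by (cases rule: row_point_cases[of r n x1 y1 x2 y2 x3 z3 \<alpha>])
      (simp_all add: construction_parts[OF c] construction_alpha_blocks[OF c, simplified])
qed

lemma alpha_in_col_labels:
  "1 \<le> m \<Longrightarrow> m \<le> 5*n \<Longrightarrow> \<alpha> m \<in> col_label y1 y2 z3 \<alpha> ` {..<5*n+3}"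
  by (rule image_eqI[of _ _ "m+2"]) (auto simp: col_label_def)

lemma row_point_coords_labelled:
  assumes "n \<ge> 1" "r < 5*n+3"
  shows "coords (row_point x1 y1 x2 y2 x3 z3 \<alpha> n r)
    \<subseteq> {x1, x2, x3} \<union> col_label y1 y2 z3 \<alpha> ` {..<5*n+3}"
proof -
  have "{y1, y2, z3} \<subseteq> col_label y1 y2 z3 \<alpha> ` {..<5*n+3}"
    using image_eqI[of _ "col_label y1 y2 z3 \<alpha>" 0] image_eqI[of _ "col_label y1 y2 z3 \<alpha>" 1]
      image_eqI[of _ "col_label y1 y2 z3 \<alpha>" 2]
    by (auto simp: col_label_def)
  with \<open>r < 5*n+3\<close> show ?thesis
    by (cases rule: row_point_cases[of r n x1 y1 x2 y2 x3 z3 \<alpha>])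
      (use \<open>n \<ge> 1\<close> in \<open>auto simp: coords_def intro!: alpha_in_col_labels\<close>)
qed

lemma construction_alpha_fresh:
  assumes c: "construction X1 X2 X3 x1 y1 x2 y2 x3 z3 \<alpha>" and "1 \<le> i"
  shows "\<alpha> i \<notin> {x1, y1, x2, y2, x3, z3}"
proof -
  note parts = construction_parts[OF c]
  have "i mod 5 = 1 \<or> i mod 5 = 4 \<or> i mod 5 = 0 \<or> i mod 5 = 2 \<or> i mod 5 = 3"
    by presburger
  then consider "i mod 5 \<in> {1, 4}" | "i mod 5 \<in> {0, 2}" | "i mod 5 = 3"
    by blast
  then show ?thesis
  proof cases
    case 1
    then have "\<alpha> i \<in> X1 - {x1, y1}" by (rule construction_alpha(1)[OF c \<open>1 \<le> i\<close>])
    then show ?thesis using parts(1-9) by (auto simp: disjoint_iff)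
  next
    case 2
    then have "\<alpha> i \<in> X2 - {x2, y2}" by (rule construction_alpha(2)[OF c \<open>1 \<le> i\<close>])
    then show ?thesis using parts(1-9) by (auto simp: disjoint_iff)
  next
    case 3
    then have "\<alpha> i \<in> X3 - {x3, z3}" by (rule construction_alpha(3)[OF c \<open>1 \<le> i\<close>])
    then show ?thesis using parts(1-9) by (auto simp: disjoint_iff)
  qed
qed

lemma col_label_inj:
  assumes c: "construction X1 X2 X3 x1 y1 x2 y2 x3 z3 \<alpha>"
  shows "inj (col_label y1 y2 z3 \<alpha>)"
proof (rule injI)
  fix a b
  assume eq: "col_label y1 y2 z3 \<alpha> a = col_label y1 y2 z3 \<alpha> b"
  have big: "col_label y1 y2 z3 \<alpha> c = \<alpha> (c - 2)" "\<alpha> (c - 2) \<notin> {y1, y2, z3}" if "c > 2" for c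
    using that construction_alpha_fresh[OF c, of "c - 2"] by (auto simp: col_label_def)
  have small: "col_label y1 y2 z3 \<alpha> c \<in> {y1, y2, z3}" if "c \<le> 2" for c
    using that by (auto simp: col_label_def)
  show "a = b"
  proof (cases "a > 2"; cases "b > 2")
    assume "a > 2" "b > 2"
    then show ?thesis
      using construction_alpha(4)[OF c, of "a - 2" "b - 2"] eq big(1) by force
  next
    assume "\<not> a > 2" "\<not> b > 2"
    moreover have "y1 \<noteq> y2" "y1 \<noteq> z3" "y2 \<noteq> z3"
      using construction_parts[OF c] by blast+
    ultimately show ?thesis
      using eq unfolding col_label_def by (auto split: if_splits)
  next
    assume "a > 2" "\<not> b > 2"
    then show ?thesis
      using eq big[of a] small[of b] by simp
  next
    assume "\<not> a > 2" "b > 2"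
    then show ?thesis
      using eq big[of b] small[of a] by simp
  qed
qed

lemma x_notin_col_labels:
  assumes c: "construction X1 X2 X3 x1 y1 x2 y2 x3 z3 \<alpha>"
  shows "x1 \<notin> range (col_label y1 y2 z3 \<alpha>)" "x2 \<notin> range (col_label y1 y2 z3 \<alpha>)"
    "x3 \<notin> range (col_label y1 y2 z3 \<alpha>)"
proof -
  have "col_label y1 y2 z3 \<alpha> c \<notin> {x1, x2, x3}" for c
  proof (cases "c > 2")
    case True
    then show ?thesis
      using construction_alpha_fresh[OF c, of "c - 2"] by (auto simp: col_label_def)
  next
    case False
    then show ?thesis
      using construction_parts[OF c] by (auto simp: col_label_def)
  qed
  then show "x1 \<notin> range (col_label y1 y2 z3 \<alpha>)" "x2 \<notin> range (col_label y1 y2 z3 \<alpha>)"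
    "x3 \<notin> range (col_label y1 y2 z3 \<alpha>)"
    by auto
qed

lemma Mmat_mult_vec:
  assumes c: "construction X1 X2 X3 x1 y1 x2 y2 x3 z3 \<alpha>" and "n \<ge> 1"
    and r: "r < 5*n+3" and u: "dim_vec u = 5*n+3"
  shows "(Mmat x1 y1 x2 y2 x3 z3 \<alpha> n *\<^sub>v u) $ r
    = coord_sum (vec_on_labels (col_label y1 y2 z3 \<alpha>) u) (row_point x1 y1 x2 y2 x3 z3 \<alpha> n r)"
proof -
  let ?M = "Mmat x1 y1 x2 y2 x3 z3 \<alpha> n" and ?p = "row_point x1 y1 x2 y2 x3 z3 \<alpha> n r"
    and ?L = "col_label y1 y2 z3 \<alpha>" and ?W = "vec_on_labels (col_label y1 y2 z3 \<alpha>) u"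
  have entry: "?M $$ (r, c) = (if ?L c \<in> coords ?p then 1 else 0)" if "c < 5*n+3" for c
    using r that unfolding Mmat_def row_point_def col_label_def by simp
  have "fst ?p \<in> X1" "fst (snd ?p) \<in> X2" "snd (snd ?p) \<in> X3"
    using row_point_coords_in_parts[OF c \<open>n \<ge> 1\<close> r] by simp_all
  then have distinct: "fst ?p \<noteq> fst (snd ?p)" "fst ?p \<noteq> snd (snd ?p)" "fst (snd ?p) \<noteq> snd (snd ?p)"
    using construction_parts(1-3)[OF c] by (metis disjoint_iff)+
  have dim: "dim_row ?M = 5*n+3" "dim_col ?M = 5*n+3"
    unfolding Mmat_def by simp_all
  have "(?M *\<^sub>v u) $ r = (\<Sum>c<5*n+3. ?M $$ (r, c) * u $ c)"
    using r u dim by (simp add: scalar_prod_def atLeast0LessThan)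
  also have "\<dots> = (\<Sum>c<5*n+3. if ?L c \<in> coords ?p then u $ c else 0)"
    by (rule sum.cong) (simp_all add: entry)
  also have "\<dots> = (\<Sum>t\<in>coords ?p. if t \<in> ?L ` {..<5*n+3} then u $ inv_into {..<5*n+3} ?L t else 0)"
    by (rule sum_if_label_in) (auto intro: inj_on_subset[OF col_label_inj[OF c]] simp: coords_def)
  also have "\<dots> = sum ?W (coords ?p)"
    unfolding vec_on_labels_def u ..
  also have "\<dots> = coord_sum ?W ?p"
    using distinct by (simp add: coords_def coord_sum_def add.assoc)
  finally show ?thesis .
qed

lemma Mmat_preimage_bounded:
  assumes c: "construction X1 X2 X3 x1 y1 x2 y2 x3 z3 \<alpha>" and "n \<ge> 1"
    and u: "u \<in> carrier_vec (5*n+3)"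
    and small: "\<And>r. r < 5*n+3 \<Longrightarrow> \<bar>(Mmat x1 y1 x2 y2 x3 z3 \<alpha> n *\<^sub>v u) $ r\<bar> \<le> 1"
    and "j < 5*n+3"
  shows "\<bar>u $ j\<bar> \<le> 20"
proof -
  let ?W = "vec_on_labels (col_label y1 y2 z3 \<alpha>) u"
  from u have u_dim: "dim_vec u = 5*n+3" by simp
  have "norm (?W (col_label y1 y2 z3 \<alpha> j)) \<le> 20"
  proof (rule coord_sum_small_imp_labels_bounded[OF \<open>n \<ge> 1\<close> _ _ _ _ \<open>j < 5*n+3\<close>])
    show "?W x1 = 0" "?W x2 = 0" "?W x3 = 0"
      using x_notin_col_labels[OF c] by (simp_all add: vec_on_labels_unlabelled)
    show "norm (coord_sum ?W (row_point x1 y1 x2 y2 x3 z3 \<alpha> n r)) \<le> 1" if "r < 5*n+3" for r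
      using small[OF that] Mmat_mult_vec[OF c \<open>n \<ge> 1\<close> that u_dim] by simp
  qed
  moreover have "?W (col_label y1 y2 z3 \<alpha> j) = u $ j"
    by (rule vec_on_labels_label)
      (use inj_on_subset[OF col_label_inj[OF c]] u_dim \<open>j < 5*n+3\<close> in simp_all)
  ultimately show ?thesis by simp
qed

lemma coord_functions_bounded:
  fixes f :: "'a \<times> 'a \<times> 'a \<Rightarrow> 'b::real_normed_field" and u1 u2 u3 :: "'a \<Rightarrow> 'b"
  assumes c: "construction X1 X2 X3 x1 y1 x2 y2 x3 z3 \<alpha>" and "n \<ge> 1"
  defines "F \<equiv> Fset x1 y1 x2 y2 x3 z3 \<alpha> n"
  assumes "\<forall>w \<in> F. norm (f w) \<le> 1"
    and "\<forall>w \<in> F. f w = u1 (fst w) + u2 (fst (snd w)) + u3 (snd (snd w))"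
    and "u1 x1 = 0" "u2 x2 = 0" "u3 x3 = 0"
  shows "\<forall>t \<in> fst ` F. norm (u1 t) \<le> 20" "\<forall>t \<in> (fst \<circ> snd) ` F. norm (u2 t) \<le> 20"
    "\<forall>t \<in> (snd \<circ> snd) ` F. norm (u3 t) \<le> 20"
proof -
  define W where "W t = (if t \<in> X1 then u1 t else if t \<in> X2 then u2 t else u3 t)" for t
  note parts = construction_parts[OF c]
  have W: "t \<in> X1 \<Longrightarrow> W t = u1 t" "t \<in> X2 \<Longrightarrow> W t = u2 t" "t \<in> X3 \<Longrightarrow> W t = u3 t" for t
    using parts(1-3) unfolding W_def by auto
  have W_x: "W x1 = 0" "W x2 = 0" "W x3 = 0"
    using W parts(4,6,8) assms(6-8) by simp_all
  have coords_F: "fst w \<in> X1 \<and> fst (snd w) \<in> X2 \<and> snd (snd w) \<in> X3 \<and>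
      coords w \<subseteq> {x1, x2, x3} \<union> col_label y1 y2 z3 \<alpha> ` {..<5*n+3}"
    if "w \<in> F" for w
  proof -
    from that consider "w = (x1, x2, x3)"
      | r where "r < 5*n+3" "w = row_point x1 y1 x2 y2 x3 z3 \<alpha> n r"
      unfolding F_def Fset_eq_row_points by blast
    then show ?thesis
    proof cases
      case 1
      then show ?thesis using parts by (simp add: coords_def)
    next
      case 2
      then show ?thesis
        using row_point_coords_in_parts[OF c \<open>n \<ge> 1\<close> \<open>r < 5*n+3\<close>]
          row_point_coords_labelled[OF \<open>n \<ge> 1\<close> \<open>r < 5*n+3\<close>] by simp
    qed
  qed
  have coord_sum_W: "coord_sum W w = u1 (fst w) + u2 (fst (snd w)) + u3 (snd (snd w))"
    if "w \<in> F" for w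
    using coords_F[OF that] W unfolding coord_sum_def by auto
  have rows: "norm (coord_sum W (row_point x1 y1 x2 y2 x3 z3 \<alpha> n r)) \<le> 1" if "r < 5*n+3" for r
  proof -
    have p: "row_point x1 y1 x2 y2 x3 z3 \<alpha> n r \<in> F"
      unfolding F_def by (rule row_point_in_Fset[OF that])
    then show ?thesis
      using assms(4,5) coord_sum_W[OF p] by simp
  qed
  have W_bounded: "norm (W t) \<le> 20" if "t \<in> {x1, x2, x3} \<union> col_label y1 y2 z3 \<alpha> ` {..<5*n+3}" for t
    using that W_x coord_sum_small_imp_labels_bounded[where W = W, OF \<open>n \<ge> 1\<close> W_x rows] by auto
  have bounded: "norm (u1 (fst w)) \<le> 20" "norm (u2 (fst (snd w))) \<le> 20"
    "norm (u3 (snd (snd w))) \<le> 20"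
    if "w \<in> F" for w
    using coords_F[OF that] W W_bounded unfolding coords_def by (metis insert_subset)+
  then show "\<forall>t \<in> fst ` F. norm (u1 t) \<le> 20" "\<forall>t \<in> (fst \<circ> snd) ` F. norm (u2 t) \<le> 20"
    "\<forall>t \<in> (snd \<circ> snd) ` F. norm (u3 t) \<le> 20"
    by auto
qed

theorem mainTheorem8:
  shows "\<exists>C::real. \<forall>n::nat. n \<ge> 1 \<longrightarrow>
    (\<forall>(X1::'a set) X2 X3 x1 y1 x2 y2 x3 z3 (\<alpha>::nat \<Rightarrow> 'a).
      construction X1 X2 X3 x1 y1 x2 y2 x3 z3 \<alpha> \<longrightarrow>
      (let M = Mmat x1 y1 x2 y2 x3 z3 \<alpha> n; F = Fset x1 y1 x2 y2 x3 z3 \<alpha> n in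
        invertible_mat M \<and>
        (\<forall>B. inverts_mat M B \<and> inverts_mat B M \<longrightarrow>
           (\<forall>i < dim_row B. (\<Sum>j < dim_col B. \<bar>B $$ (i, j)\<bar>) \<le> C)) \<and>
        (\<forall>(f::'a \<times> 'a \<times> 'a \<Rightarrow> complex) (u1::'a \<Rightarrow> complex) u2 u3.
           (\<forall>w \<in> F. cmod (f w) \<le> 1) \<and>
           (\<forall>w \<in> F. f w = u1 (fst w) + u2 (fst (snd w)) + u3 (snd (snd w))) \<and>
           u1 x1 = 0 \<and> u2 x2 = 0 \<and> u3 x3 = 0 \<longrightarrow>
           (\<forall>t \<in> fst ` F. cmod (u1 t) \<le> C) \<and>
           (\<forall>t \<in> (fst \<circ> snd) ` F. cmod (u2 t) \<le> C) \<and>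
           (\<forall>t \<in> (snd \<circ> snd) ` F. cmod (u3 t) \<le> C))))"
  unfolding Let_def
proof (intro exI[of _ 20] allI impI conjI)
  fix n :: nat and X1 X2 X3 :: "'a set" and x1 y1 x2 y2 x3 z3 :: 'a and \<alpha> :: "nat \<Rightarrow> 'a"
  assume "n \<ge> 1" and c: "construction X1 X2 X3 x1 y1 x2 y2 x3 z3 \<alpha>"
  let ?M = "Mmat x1 y1 x2 y2 x3 z3 \<alpha> n"
  have M: "?M \<in> carrier_mat (5*n+3) (5*n+3)"
    unfolding Mmat_def by simp
  note bounded = Mmat_preimage_bounded[OF c \<open>n \<ge> 1\<close>]
  show "invertible_mat ?M"
    by (rule invertible_mat_if_preimage_bounded[OF M bounded])
  show "(\<Sum>j < dim_col B. \<bar>B $$ (i, j)\<bar>) \<le> 20"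
    if "inverts_mat ?M B \<and> inverts_mat B ?M" "i < dim_row B" for B i
    using inverse_row_abs_sum_le[OF M bounded] that by blast
qed (elim conjE, rule coord_functions_bounded, assumption+)+

end
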